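(* Let $\mathcal{X}$ be a set, let $k$ be a strong kernel on $\mathcal{X}$, and let $n\in\mathbb{N}$. Then the optimal assignment kernel $K^k_{\mathfrak{B}}$ on the set $[\mathcal{X}]^n$ of all $n$-element subsets of $\mathcal{X}$ is a valid kernel, i.e. it is symmetric and for every finite collection $X_1,\dots,X_m\in[\mathcal{X}]^n$ the matrix $\big(K^k_{\mathfrak{B}}(X_i,X_j)\big)_{i,j=1}^m$ is positive semidefinite.
   Context: A strong kernel on a set $\mathcal{X}$ is a symmetric function $k:\mathcal{X}\times\mathcal{X}\to\mathbb{R}_{\ge 0}$ such that $k(x,y)\ge\min\{k(x,z),k(z,y)\}$ for all $x,y,z\in\mathcal{X}$. For $X,Y\in[\mathcal{X}]^n$, $\mathfrak{B}(X,Y)$ is the set of all bijections between $X$ and $Y$ (viewed as sets of pairs $(x,y)$), and the optimal assignment kernel is $K^k_{\mathfrak{B}}(X,Y)=\max_{B\in\mathfrak{B}(X,Y)}\sum_{(x,y)\in B}k(x,y)$. *)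

theory Defs
  imports Complex_Main
begin

definition strong_kernel :: "'a set \<Rightarrow> ('a \<Rightarrow> 'a \<Rightarrow> real) \<Rightarrow> bool" where
  "strong_kernel S k \<longleftrightarrow>
     (\<forall>x\<in>S. \<forall>y\<in>S. k x y = k y x \<and> k x y \<ge> 0) \<and>
     (\<forall>x\<in>S. \<forall>y\<in>S. \<forall>z\<in>S. k x y \<ge> min (k x z) (k z y))"

definition nsubsets :: "'a set \<Rightarrow> nat \<Rightarrow> 'a set set" where
  "nsubsets S n = {X. X \<subseteq> S \<and> finite X \<and> card X = n}"

definition bijections :: "'a set \<Rightarrow> 'a set \<Rightarrow> ('a \<times> 'a) set set" where
  "bijections X Y = {B. B \<subseteq> X \<times> Y \<and> (\<forall>x\<in>X. \<exists>!y. (x, y) \<in> B) \<and> (\<forall>y\<in>Y. \<exists>!x. (x, y) \<in> B)}"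

definition oa_kernel :: "('a \<Rightarrow> 'a \<Rightarrow> real) \<Rightarrow> 'a set \<Rightarrow> 'a set \<Rightarrow> real" where
  "oa_kernel k X Y = Max ((\<lambda>B. \<Sum>(x, y)\<in>B. k x y) ` bijections X Y)"

definition psd_matrix :: "nat \<Rightarrow> (nat \<Rightarrow> nat \<Rightarrow> real) \<Rightarrow> bool" where
  "psd_matrix m M \<longleftrightarrow> (\<forall>c :: nat \<Rightarrow> real. (\<Sum>i<m. \<Sum>j<m. c i * M i j * c j) \<ge> 0)"

end

theory Submission
  imports Defs
begin

text \<open>For a threshold t, similarity at least t is an equivalence relation on the points
  x with k x x \<ge> t, since a strong kernel is an ultrametric similarity; its classes are the
  clusters at level t. A bijection between X and Y can pair at most min |X \<inter> C| |Y \<inter> C|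
  points of a cluster C with each other, so at most the sum over all clusters C of these
  minima of its pairs reach similarity t, and greedily matching a most similar pair first
  attains this bound at every level simultaneously. Writing each kernel value as the sum of
  the gaps between consecutive kernel values below it, the optimal assignment kernel becomes
  a nonnegative combination of these histogram intersection kernels, which are positive
  semidefinite because min a b is the sum over q of [q < a] [q < b].\<close>

section \<open>Layer cake decomposition of a finite sum\<close>

definition gap :: "real set \<Rightarrow> real \<Rightarrow> real" where
  "gap V v = v - Max (insert 0 {u\<in>V. u < v})"

lemma gap_nonneg:
  assumes "finite V" "0 \<le> v"
  shows "0 \<le> gap V v"
  using assms by (simp add: gap_def)

lemma sum_gaps_below_eq:
  assumes fin: "finite V" and nonneg: "\<forall>v\<in>V. 0 \<le> v"
  shows "a \<in> insert 0 V \<Longrightarrow> (\<Sum>v | v \<in> V \<and> v \<le> a. gap V v) = a"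
proof (induction "card {v\<in>V. v \<le> a}" arbitrary: a rule: less_induct)
  case less
  show ?case
  proof (cases "a = 0")
    case True
    have "gap V v = 0" if "v \<in> V" "v \<le> a" for v
    proof -
      have "v = 0" "{u\<in>V. u < 0} = {}" using that True nonneg by force+
      then show ?thesis by (simp only: gap_def) simp
    qed
    then show ?thesis using True by simp
  next
    case False
    define p where "p = Max (insert 0 {u\<in>V. u < a})"
    have a: "a \<in> V" "0 < a" using less.prems False nonneg by auto
    have p: "p \<in> insert 0 V" "p < a" "\<And>u. u \<in> V \<Longrightarrow> u < a \<Longrightarrow> u \<le> p"
      using Max_in[of "insert 0 {u\<in>V. u < a}"] fin a by (auto simp: p_def)
    have below: "{v\<in>V. v \<le> a} = insert a {v\<in>V. v \<le> p}" and a_notin: "a \<notin> {v\<in>V. v \<le> p}"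
      using a p by force+
    have "card {v\<in>V. v \<le> p} < card {v\<in>V. v \<le> a}"
      unfolding below using a_notin fin by simp
    then have "(\<Sum>v | v \<in> V \<and> v \<le> p. gap V v) = p" using less.hyps p(1) by blast
    moreover have "gap V a = a - p" by (simp add: gap_def p_def)
    ultimately show ?thesis using below a_notin fin by simp
  qed
qed

lemma sum_layer_cake:
  assumes "finite B" "finite V" "\<forall>v\<in>V. 0 \<le> v" "f ` B \<subseteq> V"
  shows "sum f B = (\<Sum>v\<in>V. gap V v * card {p\<in>B. v \<le> f p})"
proof -
  have "sum f B = (\<Sum>p\<in>B. \<Sum>v\<in>V. if v \<le> f p then gap V v else 0)"
    using assms sum_gaps_below_eq[of V "f _"] by (intro sum.cong) (auto simp: sum.inter_filter)
  also have "\<dots> = (\<Sum>v\<in>V. \<Sum>p\<in>B. if v \<le> f p then gap V v else 0)"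
    by (rule sum.swap)
  also have "\<dots> = (\<Sum>v\<in>V. gap V v * card {p\<in>B. v \<le> f p})"
    using \<open>finite B\<close> by (simp add: sum.inter_filter[symmetric] mult.commute)
  finally show ?thesis .
qed

lemma psd_matrix_cong:
  assumes "\<And>i j. i < m \<Longrightarrow> j < m \<Longrightarrow> M i j = M' i j"
  shows "psd_matrix m M \<longleftrightarrow> psd_matrix m M'"
proof -
  have "(\<Sum>i<m. \<Sum>j<m. c i * M i j * c j) = (\<Sum>i<m. \<Sum>j<m. c i * M' i j * c j)" for c
    using assms by (intro sum.cong) auto
  then show ?thesis unfolding psd_matrix_def by simp
qed

lemma psd_matrix_sum:
  assumes "\<And>f. f \<in> F \<Longrightarrow> psd_matrix m (M f)"
  shows "psd_matrix m (\<lambda>i j. \<Sum>f\<in>F. M f i j)"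
  unfolding psd_matrix_def
proof
  fix c :: "nat \<Rightarrow> real"
  have "(\<Sum>i<m. \<Sum>j<m. c i * (\<Sum>f\<in>F. M f i j) * c j) = (\<Sum>f\<in>F. \<Sum>i<m. \<Sum>j<m. c i * M f i j * c j)"
    by (simp add: sum_distrib_left sum_distrib_right sum.swap[of _ F])
  also have "\<dots> \<ge> 0" using assms unfolding psd_matrix_def by (simp add: sum_nonneg)
  finally show "0 \<le> (\<Sum>i<m. \<Sum>j<m. c i * (\<Sum>f\<in>F. M f i j) * c j)" .
qed

lemma psd_matrix_mult_left:
  assumes "0 \<le> w" "psd_matrix m M"
  shows "psd_matrix m (\<lambda>i j. w * M i j)"
  unfolding psd_matrix_def
proof
  fix c :: "nat \<Rightarrow> real"
  have "(\<Sum>i<m. \<Sum>j<m. c i * (w * M i j) * c j) = w * (\<Sum>i<m. \<Sum>j<m. c i * M i j * c j)"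
    by (simp add: sum_distrib_left mult_ac)
  also have "\<dots> \<ge> 0" using assms unfolding psd_matrix_def by simp
  finally show "0 \<le> (\<Sum>i<m. \<Sum>j<m. c i * (w * M i j) * c j)" .
qed

lemma psd_matrix_outer: "psd_matrix m (\<lambda>i j. g i * g j)"
  unfolding psd_matrix_def
proof
  fix c :: "nat \<Rightarrow> real"
  have "(\<Sum>i<m. \<Sum>j<m. c i * (g i * g j) * c j) = (\<Sum>i<m. c i * g i)\<^sup>2"
    by (simp add: power2_eq_square sum_product mult_ac)
  then show "0 \<le> (\<Sum>i<m. \<Sum>j<m. c i * (g i * g j) * c j)" by simp
qed

lemma psd_matrix_min: "psd_matrix m (\<lambda>i j. real (min (a i) (a j)))"
proof -
  define N where "N = (\<Sum>i<m. a i)"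
  define ind where "ind q i = (if q < a i then 1 else 0 :: real)" for q i
  have "real (min (a i) (a j)) = (\<Sum>q<N. ind q i * ind q j)" if "i < m" "j < m" for i j
  proof -
    have "min (a i) (a j) \<le> N"
      using that member_le_sum[of i "{..<m}" a] by (simp add: N_def min.coboundedI1)
    then have "{q\<in>{..<N}. q < min (a i) (a j)} = {..<min (a i) (a j)}" by auto
    moreover have "(\<Sum>q<N. ind q i * ind q j) = (\<Sum>q<N. if q < min (a i) (a j) then 1 else 0)"
      by (intro sum.cong) (auto simp: ind_def)
    ultimately show ?thesis by (simp flip: sum.inter_filter)
  qed
  moreover have "psd_matrix m (\<lambda>i j. \<Sum>q<N. ind q i * ind q j)"
    by (intro psd_matrix_sum psd_matrix_outer)
  ultimately show ?thesis by (subst psd_matrix_cong) auto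
qed

lemma bijections_subset: "B \<in> bijections X Y \<Longrightarrow> B \<subseteq> X \<times> Y"
  by (simp add: bijections_def)

lemma finite_bijections: "finite X \<Longrightarrow> finite Y \<Longrightarrow> finite (bijections X Y)"
  by (rule finite_subset[of _ "Pow (X \<times> Y)"]) (auto simp: bijections_def)

lemma inj_on_fst_bijections: "B \<in> bijections X Y \<Longrightarrow> inj_on fst B"
  unfolding bijections_def inj_on_def by fastforce

lemma inj_on_snd_bijections: "B \<in> bijections X Y \<Longrightarrow> inj_on snd B"
  unfolding bijections_def inj_on_def by fastforce

lemma insert_bijections:
  assumes "B \<in> bijections (X - {x}) (Y - {y})" "x \<in> X" "y \<in> Y"
  shows "insert (x, y) B \<in> bijections X Y"
proof -
  have B: "B \<subseteq> (X - {x}) \<times> (Y - {y})" "\<forall>x'\<in>X - {x}. \<exists>!y'. (x', y') \<in> B"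
    "\<forall>y'\<in>Y - {y}. \<exists>!x'. (x', y') \<in> B"
    using assms(1) unfolding bijections_def by auto
  have "\<exists>!y'. (x', y') \<in> insert (x, y) B" if "x' \<in> X" for x'
    using B that by (cases "x' = x") auto
  moreover have "\<exists>!x'. (x', y') \<in> insert (x, y) B" if "y' \<in> Y" for y'
    using B that by (cases "y' = y") auto
  ultimately show ?thesis using B(1) assms(2,3) unfolding bijections_def by auto
qed

section \<open>Clusters of a strong kernel\<close>

definition cluster :: "('a \<Rightarrow> 'a \<Rightarrow> real) \<Rightarrow> 'a set \<Rightarrow> real \<Rightarrow> 'a \<Rightarrow> 'a set" where
  "cluster k A t z = {w\<in>A. t \<le> k w z}"

text \<open>A point z with k z z < t gives the empty cluster, which contributes nothing below.\<close>

definition clusters :: "('a \<Rightarrow> 'a \<Rightarrow> real) \<Rightarrow> 'a set \<Rightarrow> real \<Rightarrow> 'a set set" where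
  "clusters k A t = cluster k A t ` A"

definition level_overlap :: "('a \<Rightarrow> 'a \<Rightarrow> real) \<Rightarrow> 'a set \<Rightarrow> real \<Rightarrow> 'a set \<Rightarrow> 'a set \<Rightarrow> nat" where
  "level_overlap k A t X Y = (\<Sum>C\<in>clusters k A t. min (card (X \<inter> C)) (card (Y \<inter> C)))"

lemma level_overlap_sym: "level_overlap k A t X Y = level_overlap k A t Y X"
  by (simp add: level_overlap_def min.commute)

lemma level_overlap_empty: "level_overlap k A t {} {} = 0"
  by (simp add: level_overlap_def)

lemma finite_clusters: "finite A \<Longrightarrow> finite (clusters k A t)"
  by (simp add: clusters_def)

lemma strong_kernel_subset: "strong_kernel S k \<Longrightarrow> A \<subseteq> S \<Longrightarrow> strong_kernel A k"
  unfolding strong_kernel_def by blast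

context
  fixes A :: "'a set" and k :: "'a \<Rightarrow> 'a \<Rightarrow> real"
  assumes sk: "strong_kernel A k"
begin

lemma kernel_sym: "x \<in> A \<Longrightarrow> y \<in> A \<Longrightarrow> k x y = k y x"
  using sk unfolding strong_kernel_def by blast

lemma kernel_nonneg: "x \<in> A \<Longrightarrow> y \<in> A \<Longrightarrow> 0 \<le> k x y"
  using sk unfolding strong_kernel_def by blast

lemma kernel_threshold_trans:
  assumes "x \<in> A" "y \<in> A" "z \<in> A" "t \<le> k x z" "t \<le> k z y"
  shows "t \<le> k x y"
proof -
  have "min (k x z) (k z y) \<le> k x y" using sk assms(1-3) unfolding strong_kernel_def by blast
  then show ?thesis using assms(4,5) by linarith
qed

lemma kernel_le_diag: "x \<in> A \<Longrightarrow> y \<in> A \<Longrightarrow> k x y \<le> k x x"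
  using kernel_threshold_trans[of x x y "k x y"] kernel_sym[of x y] by simp

lemma cluster_eq:
  assumes "w \<in> A" "z \<in> A" "t \<le> k w z"
  shows "cluster k A t w = cluster k A t z"
proof -
  have "t \<le> k z w" using assms kernel_sym by simp
  then have "t \<le> k v w \<longleftrightarrow> t \<le> k v z" if "v \<in> A" for v
    using assms that kernel_threshold_trans[of v z w t] kernel_threshold_trans[of v w z t] by blast
  then show ?thesis unfolding cluster_def by auto
qed

lemma mem_clusters_iff:
  assumes "C \<in> clusters k A t" "x \<in> A" "t \<le> k x x"
  shows "x \<in> C \<longleftrightarrow> C = cluster k A t x"
proof
  obtain z where z: "z \<in> A" "C = cluster k A t z" using assms(1) unfolding clusters_def by blast
  assume "x \<in> C"
  then have "t \<le> k x z" using z(2) by (simp add: cluster_def)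
  then show "C = cluster k A t x" using cluster_eq[OF assms(2) z(1)] z(2) by simp
next
  assume "C = cluster k A t x"
  then show "x \<in> C" using assms(2,3) by (simp add: cluster_def)
qed

lemma threshold_le_if_mem_cluster:
  assumes "C \<in> clusters k A t" "x \<in> C" "y \<in> C"
  shows "t \<le> k x y"
proof -
  obtain z where z: "z \<in> A" "C = cluster k A t z" using assms(1) unfolding clusters_def by blast
  then have "x \<in> A" "y \<in> A" "t \<le> k x z" "t \<le> k z y"
    using assms(2,3) kernel_sym[of y z] by (auto simp: cluster_def)
  then show ?thesis using kernel_threshold_trans z(1) by blast
qed

lemma card_pairs_above_le_level_overlap:
  assumes fin: "finite A" and XA: "X \<subseteq> A" and YA: "Y \<subseteq> A" and B: "B \<in> bijections X Y"
  shows "card {p\<in>B. t \<le> case_prod k p} \<le> level_overlap k A t X Y"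
proof -
  have BXY: "B \<subseteq> X \<times> Y" using B by (rule bijections_subset)
  have fin_XY: "finite X" "finite Y" using fin XA YA finite_subset by auto
  let ?inside = "\<lambda>C. {p\<in>B. fst p \<in> C \<and> snd p \<in> C}"
  have "{p\<in>B. t \<le> case_prod k p} \<subseteq> (\<Union>C\<in>clusters k A t. ?inside C)"
  proof
    fix p assume "p \<in> {p\<in>B. t \<le> case_prod k p}"
    moreover obtain x y where p: "p = (x, y)" by fastforce
    ultimately have xy: "(x, y) \<in> B" "t \<le> k x y" by auto
    then have "x \<in> A" "y \<in> A" using BXY XA YA by auto
    then have "x \<in> cluster k A t x" "y \<in> cluster k A t x" "cluster k A t x \<in> clusters k A t"
      using xy kernel_le_diag[of x y] kernel_sym[of x y] by (auto simp: cluster_def clusters_def)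
    then show "p \<in> (\<Union>C\<in>clusters k A t. ?inside C)" using xy(1) p by force
  qed
  then have "card {p\<in>B. t \<le> case_prod k p} \<le> card (\<Union>C\<in>clusters k A t. ?inside C)"
    using fin fin_XY BXY finite_subset[OF BXY]
    by (intro card_mono) (auto simp: finite_clusters)
  also have "\<dots> \<le> (\<Sum>C\<in>clusters k A t. card (?inside C))"
    by (rule card_UN_le[OF finite_clusters[OF fin]])
  also have "\<dots> \<le> level_overlap k A t X Y"
    unfolding level_overlap_def
  proof (rule sum_mono)
    fix C
    have "card (?inside C) \<le> card (X \<inter> C)"
      using BXY fin_XY inj_on_subset[OF inj_on_fst_bijections[OF B]]
      by (intro card_inj_on_le[of fst]) auto
    moreover have "card (?inside C) \<le> card (Y \<inter> C)"
      using BXY fin_XY inj_on_subset[OF inj_on_snd_bijections[OF B]]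
      by (intro card_inj_on_le[of snd]) auto
    ultimately show "card (?inside C) \<le> min (card (X \<inter> C)) (card (Y \<inter> C))" by simp
  qed
  finally show ?thesis .
qed

lemma level_overlap_remove_pair:
  assumes fin: "finite A" and XA: "X \<subseteq> A" and YA: "Y \<subseteq> A"
    and xy: "x \<in> X" "y \<in> Y" and t: "t \<le> k x y"
  shows "level_overlap k A t X Y = Suc (level_overlap k A t (X - {x}) (Y - {y}))"
proof -
  define C0 where "C0 = cluster k A t x"
  have A: "x \<in> A" "y \<in> A" using xy XA YA by auto
  have diag: "t \<le> k x x" "t \<le> k y y" and "t \<le> k y x"
    using t A kernel_le_diag[of x y] kernel_le_diag[of y x] kernel_sym[of x y] by auto
  have C0: "C0 \<in> clusters k A t" using A by (simp add: C0_def clusters_def)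
  have mem: "x \<in> C \<longleftrightarrow> C = C0" "y \<in> C \<longleftrightarrow> C = C0" if "C \<in> clusters k A t" for C
    using mem_clusters_iff[OF that] A diag cluster_eq[OF A(2,1) \<open>t \<le> k y x\<close>]
    by (simp_all add: C0_def)
  have "min (card (X \<inter> C)) (card (Y \<inter> C))
      = min (card ((X - {x}) \<inter> C)) (card ((Y - {y}) \<inter> C)) + (if C = C0 then 1 else 0)"
    if C: "C \<in> clusters k A t" for C
  proof (cases "C = C0")
    case True
    then have "X \<inter> C = insert x ((X - {x}) \<inter> C)" "Y \<inter> C = insert y ((Y - {y}) \<inter> C)"
      using mem[OF C] xy by auto
    moreover have "finite X" "finite Y" using fin XA YA finite_subset by auto
    ultimately show ?thesis using True by simp
  next
    case False
    then have "(X - {x}) \<inter> C = X \<inter> C" "(Y - {y}) \<inter> C = Y \<inter> C" using mem[OF C] by auto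
    then show ?thesis using False by simp
  qed
  then show ?thesis
    unfolding level_overlap_def using C0 finite_clusters[OF fin] by (simp add: sum.distrib)
qed

lemma level_overlap_eq_0:
  assumes XA: "X \<subseteq> A" and YA: "Y \<subseteq> A" and below: "\<forall>x\<in>X. \<forall>y\<in>Y. k x y < t"
  shows "level_overlap k A t X Y = 0"
  unfolding level_overlap_def
proof (rule sum.neutral, rule ballI)
  fix C assume C: "C \<in> clusters k A t"
  have "X \<inter> C = {} \<or> Y \<inter> C = {}"
    using threshold_le_if_mem_cluster[OF C] below by fastforce
  then show "min (card (X \<inter> C)) (card (Y \<inter> C)) = 0" by auto
qed

lemma exists_bijection_card_pairs_above_eq_level_overlap:
  assumes fin: "finite A"
  shows "X \<subseteq> A \<Longrightarrow> Y \<subseteq> A \<Longrightarrow> card X = card Y \<Longrightarrow>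
    \<exists>B\<in>bijections X Y. \<forall>t. card {p\<in>B. t \<le> case_prod k p} = level_overlap k A t X Y"
proof (induction "card X" arbitrary: X Y)
  case 0
  then have "X = {}" "Y = {}" using fin finite_subset by (metis card_0_eq)+
  moreover have "{} \<in> bijections {} ({} :: 'a set)" by (simp add: bijections_def)
  ultimately show ?case by (intro bexI[of _ "{}"]) (auto simp: level_overlap_empty)
next
  case (Suc n)
  have fin_XY: "finite X" "finite Y" using fin Suc.prems finite_subset by auto
  have "X \<times> Y \<noteq> {}" using Suc.hyps(2) Suc.prems(3) by auto
  then have "Max (case_prod k ` (X \<times> Y)) \<in> case_prod k ` (X \<times> Y)"
    using fin_XY by (intro Max_in) auto
  then obtain x y where xy: "x \<in> X" "y \<in> Y" and "Max (case_prod k ` (X \<times> Y)) = k x y" by auto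
  then have most_similar: "k x' y' \<le> k x y" if "x' \<in> X" "y' \<in> Y" for x' y'
    using that fin_XY Max_ge[of "case_prod k ` (X \<times> Y)" "k x' y'"] by auto
  have "n = card (X - {x})" "card (X - {x}) = card (Y - {y})"
    using Suc xy fin_XY by auto
  then obtain B' where B': "B' \<in> bijections (X - {x}) (Y - {y})"
    and count': "\<forall>t. card {p\<in>B'. t \<le> case_prod k p} = level_overlap k A t (X - {x}) (Y - {y})"
    using Suc.hyps(1)[of "X - {x}" "Y - {y}"] Suc.prems by blast
  define B where "B = insert (x, y) B'"
  have B: "B \<in> bijections X Y" unfolding B_def using B' xy by (rule insert_bijections)
  have "card {p\<in>B. t \<le> case_prod k p} = level_overlap k A t X Y" for t
  proof (cases "t \<le> k x y")
    case True
    have "(x, y) \<notin> B'" "finite B'"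
      using bijections_subset[OF B'] fin_XY finite_subset[of B' "X \<times> Y"] by auto
    moreover have "{p\<in>B. t \<le> case_prod k p} = insert (x, y) {p\<in>B'. t \<le> case_prod k p}"
      using True by (auto simp: B_def)
    ultimately show ?thesis
      using count' level_overlap_remove_pair[OF fin Suc.prems(1,2) xy True] by simp
  next
    case False
    then have below: "\<forall>x'\<in>X. \<forall>y'\<in>Y. k x' y' < t" using most_similar by fastforce
    then have none: "{p\<in>B. t \<le> case_prod k p} = {}" using bijections_subset[OF B] by fastforce
    show ?thesis unfolding none using level_overlap_eq_0[OF Suc.prems(1,2) below] by simp
  qed
  then show ?case using B by blast
qed

lemma oa_kernel_eq_sum_level_overlap:
  assumes fin: "finite A" and XA: "X \<subseteq> A" and YA: "Y \<subseteq> A" and card: "card X = card Y"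
  defines "V \<equiv> case_prod k ` (A \<times> A)"
  shows "oa_kernel k X Y = (\<Sum>v\<in>V. gap V v * level_overlap k A v X Y)"
proof -
  have fin_V: "finite V" and V_nonneg: "\<forall>v\<in>V. 0 \<le> v"
    using fin kernel_nonneg by (auto simp: V_def)
  have layer_cake: "(\<Sum>(x, y)\<in>B. k x y) = (\<Sum>v\<in>V. gap V v * card {p\<in>B. v \<le> case_prod k p})"
    if B: "B \<in> bijections X Y" for B
  proof (rule sum_layer_cake[OF _ fin_V V_nonneg])
    show "finite B" using bijections_subset[OF B] XA YA fin finite_subset[of B "A \<times> A"] by auto
    show "case_prod k ` B \<subseteq> V" using bijections_subset[OF B] XA YA by (auto simp: V_def)
  qed
  obtain B0 where B0: "B0 \<in> bijections X Y"
    and count: "\<forall>t. card {p\<in>B0. t \<le> case_prod k p} = level_overlap k A t X Y"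
    using exists_bijection_card_pairs_above_eq_level_overlap[OF fin XA YA card] by blast
  show ?thesis unfolding oa_kernel_def
  proof (rule Max_eqI)
    show "finite ((\<lambda>B. \<Sum>(x, y)\<in>B. k x y) ` bijections X Y)"
      using fin XA YA by (intro finite_imageI finite_bijections) (auto intro: finite_subset)
  next
    fix s assume "s \<in> (\<lambda>B. \<Sum>(x, y)\<in>B. k x y) ` bijections X Y"
    then obtain B where B: "B \<in> bijections X Y" and s: "s = (\<Sum>(x, y)\<in>B. k x y)" by blast
    have "card {p\<in>B. v \<le> case_prod k p} \<le> level_overlap k A v X Y" for v
      by (rule card_pairs_above_le_level_overlap[OF fin XA YA B])
    then show "s \<le> (\<Sum>v\<in>V. gap V v * level_overlap k A v X Y)"
      unfolding s layer_cake[OF B] using fin_V V_nonneg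
      by (intro sum_mono mult_left_mono gap_nonneg) auto
  next
    show "(\<Sum>v\<in>V. gap V v * level_overlap k A v X Y) \<in> (\<lambda>B. \<Sum>(x, y)\<in>B. k x y) ` bijections X Y"
      using B0 layer_cake[OF B0] count by force
  qed
qed

end

theorem corollary1:
  fixes S :: "'a set" and k :: "'a \<Rightarrow> 'a \<Rightarrow> real" and n :: nat
  assumes "strong_kernel S k"
  shows "(\<forall>X\<in>nsubsets S n. \<forall>Y\<in>nsubsets S n. oa_kernel k X Y = oa_kernel k Y X) \<and>
         (\<forall>(m::nat) (Xs :: nat \<Rightarrow> 'a set). (\<forall>i<m. Xs i \<in> nsubsets S n) \<longrightarrow>
            psd_matrix m (\<lambda>i j. oa_kernel k (Xs i) (Xs j)))"
proof (intro conjI ballI allI impI)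
  fix X Y assume "X \<in> nsubsets S n" "Y \<in> nsubsets S n"
  then have "finite (X \<union> Y)" "strong_kernel (X \<union> Y) k" "card X = card Y"
    using assms strong_kernel_subset[of S k "X \<union> Y"] by (auto simp: nsubsets_def)
  then show "oa_kernel k X Y = oa_kernel k Y X"
    using oa_kernel_eq_sum_level_overlap[of "X \<union> Y" k] level_overlap_sym[of k _ _ Y X] by simp
next
  fix m and Xs :: "nat \<Rightarrow> 'a set"
  assume Xs: "\<forall>i<m. Xs i \<in> nsubsets S n"
  define A where "A = (\<Union>i<m. Xs i)"
  define V where "V = case_prod k ` (A \<times> A)"
  have fin: "finite A" and sk: "strong_kernel A k"
    using Xs assms strong_kernel_subset[of S k A] by (auto simp: A_def nsubsets_def)
  have "oa_kernel k (Xs i) (Xs j)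
      = (\<Sum>v\<in>V. gap V v * (\<Sum>C\<in>clusters k A v. real (min (card (Xs i \<inter> C)) (card (Xs j \<inter> C)))))"
    if "i < m" "j < m" for i j
    using oa_kernel_eq_sum_level_overlap[OF sk fin, of "Xs i" "Xs j"] Xs that
    by (auto simp: A_def V_def nsubsets_def level_overlap_def)
  moreover have "psd_matrix m (\<lambda>i j. \<Sum>v\<in>V. gap V v *
      (\<Sum>C\<in>clusters k A v. real (min (card (Xs i \<inter> C)) (card (Xs j \<inter> C)))))"
    using fin kernel_nonneg[OF sk]
    by (intro psd_matrix_sum psd_matrix_mult_left psd_matrix_min gap_nonneg) (auto simp: V_def)
  ultimately show "psd_matrix m (\<lambda>i j. oa_kernel k (Xs i) (Xs j))"
    by (subst psd_matrix_cong) auto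
qed

end
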